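(* For every $\Delta, m \in \mathbb{Z}_{>0}$, we have \[ h(\Delta,m) \leq h(1,m) + (\Delta-1)\cdot h_s^{\Delta}(m). \] In particular, $h(\Delta,m) \leq h(1,m) + (\Delta-1)\cdot h_s(m)$.
   Context: For a real matrix $A \in \mathbb{R}^{m\times n}$ and $1 \le k \le \min\{m,n\}$, let $\Delta_k(A)$ denote the maximum of $|\det(B)|$ over all $k\times k$ submatrices $B$ of $A$. A matrix is called totally $1$-submodular if every square submatrix (of every size) has determinant of absolute value at most $1$. The generalized Heller constant $h(\Delta,m)$ is the maximum $n$ such that some $A \in \mathbb{Z}^{m\times n}$ with pairwise distinct columns has $\Delta_m(A)=\Delta$. For $t \in \mathbb{R}^m$ and $A\in\mathbb{R}^{m\times n}$ with columns $A_1,\dots,A_n$, $t+A$ denotes the matrix with columns $t+A_1,\dots,t+A_n$. The shifted Heller constant $h_s(m)$ is the maximum $n$ such that there exist $t \in [0,1)^m\setminus\{\mathbf 0\}$ and $A \in \{-1,0,1\}^{m\times n}$ with pairwise distinct columns such that $t+A$ is totally $1$-submodular. For an integer $\delta \ge 2$, the refined shifted Heller constant $h_s^{\delta}(m)$ is defined in the same way but with $t$ restricted to $[0,1)^m \cap (\tfrac{1}{\delta}\mathbb{Z})^m \setminus\{\mathbf 0\}$. (When $\Delta = 1$ the second summand has coefficient $\Delta-1=0$ and is interpreted as $0$.) *)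

theory Defs
  imports "Jordan_Normal_Form.Determinant" "Jordan_Normal_Form.DL_Submatrix"
          "HOL-Library.Extended_Nat"
begin

text \<open>Delta_k(A): maximum absolute value of a k x k minor of A
  (meaningful for 1 <= k <= min(dim_row A, dim_col A)).\<close>
definition Delta_k :: "nat \<Rightarrow> 'a::{comm_ring_1, linordered_idom} mat \<Rightarrow> 'a" where
  "Delta_k k A = Max {\<bar>det (submatrix A I J)\<bar> | I J.
      I \<subseteq> {..<dim_row A} \<and> J \<subseteq> {..<dim_col A} \<and> card I = k \<and> card J = k}"

definition totally_1_submodular :: "real mat \<Rightarrow> bool" where
  "totally_1_submodular B \<longleftrightarrow>
     (\<forall>I J. I \<subseteq> {..<dim_row B} \<longrightarrow> J \<subseteq> {..<dim_col B} \<longrightarrow> card I = card J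
        \<longrightarrow> \<bar>det (submatrix B I J)\<bar> \<le> 1)"

definition shift_mat :: "real vec \<Rightarrow> real mat \<Rightarrow> real mat" where
  "shift_mat t A = mat (dim_row A) (dim_col A) (\<lambda>(i,j). t $ i + A $$ (i,j))"

definition heller :: "nat \<Rightarrow> nat \<Rightarrow> enat" where
  "heller \<Delta> m = Sup {enat n | n. \<exists>A :: int mat. A \<in> carrier_mat m n \<and> m \<le> n \<and>
       distinct (cols A) \<and> Delta_k m A = int \<Delta>}"

definition shifted_admissible :: "(real vec \<Rightarrow> bool) \<Rightarrow> nat \<Rightarrow> nat \<Rightarrow> bool" where
  "shifted_admissible T m n \<longleftrightarrow>
     (\<exists>t A. t \<in> carrier_vec m \<and> (\<forall>i<m. 0 \<le> t $ i \<and> t $ i < 1) \<and> t \<noteq> 0\<^sub>v m \<and> T t \<and>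
        A \<in> carrier_mat m n \<and> (\<forall>i<m. \<forall>j<n. A $$ (i,j) \<in> {-1, 0, 1}) \<and>
        distinct (cols A) \<and> totally_1_submodular (shift_mat t A))"

definition shifted_heller :: "nat \<Rightarrow> enat" where
  "shifted_heller m = Sup {enat n | n. shifted_admissible (\<lambda>_. True) m n}"

definition refined_shifted_heller :: "nat \<Rightarrow> nat \<Rightarrow> enat" where
  "refined_shifted_heller \<delta> m = Sup {enat n | n. shifted_admissible
      (\<lambda>t. \<forall>i<dim_vec t. \<exists>k::int. t $ i = of_int k / of_nat \<delta>) m n}"

end

theory Submission
  imports Defs
begin

text \<open>
  Let A be an integer m \<times> n matrix with distinct columns and \<Delta>_m(A) = \<Delta>, and let B be an
  m \<times> m submatrix of A with |det B| = \<Delta>. The matrix C = B^-1 A contains the identity, and its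
  maximal minors are those of A divided by det B, hence at most 1 in absolute value; bordering
  with identity columns shows that C is totally 1-submodular. The entries of C lie in
  (1/\<Delta>)\<int>, and since \<int>^m / B \<int>^m has \<Delta> elements, the columns of C have at most \<Delta>
  distinct fractional parts. The columns with zero fractional part form an integer matrix with
  \<Delta>_m = 1; for each of the at most \<Delta> - 1 nonzero fractional parts t, the corresponding
  columns are t + A' with A' a {-1, 0, 1}-matrix and t + A' totally 1-submodular.
\<close>

section \<open>Submatrices\<close>

lemma pick_eqI: "x \<in> S \<Longrightarrow> card {a\<in>S. a < x} = i \<Longrightarrow> pick S i = x"
  using pick_card_in_set by blast

lemma pick_lessThan: "i < m \<Longrightarrow> pick {..<m} i = i"
proof (rule pick_eqI)
  assume "i < m"
  then have "{a \<in> {..<m}. a < i} = {..<i}" by auto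
  then show "card {a \<in> {..<m}. a < i} = i" by simp
qed simp

lemma pick_less_iff:
  assumes "i < card S" "j < card S"
  shows "pick S i < pick S j \<longleftrightarrow> i < j"
  using assms pick_mono_le[of j S i] pick_mono_le[of i S j] by (metis not_less_iff_gr_or_eq)

lemma inj_on_pick: "inj_on (pick S) {..<card S}"
  unfolding inj_on_def by (metis lessThan_iff nat_neq_iff pick_mono_le)

lemma bij_betw_pick:
  assumes "finite S"
  shows "bij_betw (pick S) {..<card S} S"
proof (rule bij_betw_imageI[OF inj_on_pick])
  show "pick S ` {..<card S} = S"
  proof
    show "pick S ` {..<card S} \<subseteq> S" using pick_in_set_le by auto
    show "S \<subseteq> pick S ` {..<card S}"
    proof
      fix x assume x: "x \<in> S"
      have "{a\<in>S. a < x} \<subset> S" using x by auto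
      then have "card {a\<in>S. a < x} < card S" using assms by (rule psubset_card_mono[rotated])
      moreover have "x = pick S (card {a\<in>S. a < x})" using pick_card_in_set[OF x] by simp
      ultimately show "x \<in> pick S ` {..<card S}" by blast
    qed
  qed
qed

lemma card_pick_image: "K \<subseteq> {..<card S} \<Longrightarrow> card (pick S ` K) = card K"
  by (rule card_image, rule inj_on_subset[OF inj_on_pick])

lemma pick_image_subset: "K \<subseteq> {..<card S} \<Longrightarrow> pick S ` K \<subseteq> S"
  using pick_in_set_le by auto

lemma pick_insert:
  assumes fin: "finite I" and r: "r \<notin> I" and i: "i < card I"
  shows "pick (insert r I) (if i < card {a\<in>I. a < r} then i else Suc i) = pick I i"
proof -
  define x where "x = pick I i"
  define q where "q = card {a\<in>I. a < r}"
  have xI: "x \<in> I" unfolding x_def by (rule pick_in_set_le[OF i])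
  have cx: "card {a\<in>I. a < x} = i" unfolding x_def by (rule card_pick_le[OF i])
  show ?thesis
  proof (cases "r < x")
    case True
    have "{a\<in>insert r I. a < x} = insert r {a\<in>I. a < x}" using True by auto
    then have "card {a\<in>insert r I. a < x} = Suc i" using cx r fin by simp
    moreover have "q \<le> i" unfolding q_def cx[symmetric] by (rule card_mono) (use fin True in auto)
    ultimately show ?thesis using xI unfolding q_def[symmetric] x_def[symmetric]
      by (intro pick_eqI) auto
  next
    case False
    then have xr: "x < r" using xI r by (metis linorder_neqE_nat)
    have "{a\<in>insert r I. a < x} = {a\<in>I. a < x}" using xr by auto
    then have "card {a\<in>insert r I. a < x} = i" using cx by simp
    moreover have "{a\<in>I. a < x} \<subset> {a\<in>I. a < r}" using xr xI by auto
    then have "i < q" unfolding q_def cx[symmetric] by (rule psubset_card_mono[rotated]) (use fin in auto)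
    ultimately show ?thesis using xI unfolding q_def[symmetric] x_def[symmetric]
      by (intro pick_eqI) auto
  qed
qed

lemma pick_pick_image:
  assumes K: "K \<subseteq> {..<card S}" and k: "k < card K"
  shows "pick (pick S ` K) k = pick S (pick K k)"
proof (rule pick_eqI)
  have pK: "pick K k \<in> K" by (rule pick_in_set_le[OF k])
  then show "pick S (pick K k) \<in> pick S ` K" by blast
  have "{a \<in> pick S ` K. a < pick S (pick K k)} = pick S ` {b\<in>K. b < pick K k}"
    using pick_less_iff[of _ S "pick K k"] K pK by auto
  also have "card \<dots> = card {b\<in>K. b < pick K k}"
    by (rule card_image, rule inj_on_subset[OF inj_on_pick]) (use K in auto)
  also have "\<dots> = k" by (rule card_pick_le[OF k])
  finally show "card {a \<in> pick S ` K. a < pick S (pick K k)} = k" .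
qed

lemma dim_submatrix_subset:
  assumes "I \<subseteq> {..<dim_row M}" "K \<subseteq> {..<dim_col M}"
  shows "dim_row (submatrix M I K) = card I" "dim_col (submatrix M I K) = card K"
proof -
  have "{i. i < dim_row M \<and> i \<in> I} = I" "{j. j < dim_col M \<and> j \<in> K} = K" using assms by auto
  then show "dim_row (submatrix M I K) = card I" "dim_col (submatrix M I K) = card K"
    unfolding dim_submatrix by simp_all
qed

lemma submatrix_carrier_mat:
  assumes "M \<in> carrier_mat m N" "I \<subseteq> {..<m}" "K \<subseteq> {..<N}"
  shows "submatrix M I K \<in> carrier_mat (card I) (card K)"
  using dim_submatrix_subset[of I M K] assms by auto

lemma submatrix_index_subset:
  assumes "M \<in> carrier_mat m N" "I \<subseteq> {..<m}" "K \<subseteq> {..<N}" "i < card I" "k < card K"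
  shows "submatrix M I K $$ (i,k) = M $$ (pick I i, pick K k)"
proof -
  have "{i. i < dim_row M \<and> i \<in> I} = I" "{j. j < dim_col M \<and> j \<in> K} = K" using assms by auto
  then show ?thesis using assms by (intro submatrix_index) simp_all
qed

lemma submatrix_all_rows_index:
  assumes "M \<in> carrier_mat m N" "K \<subseteq> {..<N}" "i < m" "k < card K"
  shows "submatrix M {..<m} K $$ (i,k) = M $$ (i, pick K k)"
  using submatrix_index_subset[OF assms(1) subset_refl assms(2)] assms(3,4) pick_lessThan by simp

lemma submatrix_submatrix_cols:
  assumes M: "M \<in> carrier_mat m N" and S: "S \<subseteq> {..<N}"
    and I: "I \<subseteq> {..<m}" and K: "K \<subseteq> {..<card S}"
  shows "submatrix (submatrix M {..<m} S) I K = submatrix M I (pick S ` K)"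
proof -
  have MS: "submatrix M {..<m} S \<in> carrier_mat m (card S)"
    using submatrix_carrier_mat[OF M subset_refl S] by simp
  have pS: "pick S ` K \<subseteq> {..<N}" using pick_image_subset[OF K] S by auto
  have lhs: "submatrix (submatrix M {..<m} S) I K \<in> carrier_mat (card I) (card K)"
    by (rule submatrix_carrier_mat[OF MS I K])
  have rhs: "submatrix M I (pick S ` K) \<in> carrier_mat (card I) (card K)"
    using submatrix_carrier_mat[OF M I pS] card_pick_image[OF K] by simp
  show ?thesis
  proof (rule eq_matI)
    fix i k assume "i < dim_row (submatrix M I (pick S ` K))" "k < dim_col (submatrix M I (pick S ` K))"
    then have i: "i < card I" and k: "k < card K" using rhs by auto
    have "pick I i < m" using pick_in_set_le[OF i] I by auto
    moreover have "pick K k < card S" using pick_in_set_le[OF k] K by auto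
    ultimately show "submatrix (submatrix M {..<m} S) I K $$ (i,k) = submatrix M I (pick S ` K) $$ (i,k)"
      using i k card_pick_image[OF K]
      by (simp add: submatrix_index_subset[OF MS I K] submatrix_index_subset[OF M I pS]
          submatrix_all_rows_index[OF M S] pick_pick_image[OF K])
  qed (use lhs rhs in auto)
qed

lemma submatrix_map_mat: "submatrix (map_mat f M) I K = map_mat f (submatrix M I K)"
proof (rule eq_matI)
  fix i j assume "i < dim_row (map_mat f (submatrix M I K))" "j < dim_col (map_mat f (submatrix M I K))"
  then have i: "i < card {a. a < dim_row M \<and> a \<in> I}" and j: "j < card {a. a < dim_col M \<and> a \<in> K}"
    by (simp_all add: dim_submatrix)
  have "pick I i < dim_row M" "pick K j < dim_col M" using pick_le[OF i] pick_le[OF j] .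
  then show "submatrix (map_mat f M) I K $$ (i, j) = map_mat f (submatrix M I K) $$ (i, j)"
    using i j unfolding submatrix_def by simp
qed (simp_all add: dim_submatrix)

lemma submatrix_mult_all_rows:
  assumes B: "B \<in> carrier_mat p m" and M: "M \<in> carrier_mat m N" and K: "K \<subseteq> {..<N}"
  shows "submatrix (B * M) {..<p} K = B * submatrix M {..<m} K"
proof -
  have BM: "B * M \<in> carrier_mat p N" using B M by simp
  have MK: "submatrix M {..<m} K \<in> carrier_mat m (card K)" using submatrix_carrier_mat[OF M subset_refl K] by simp
  show ?thesis
  proof (rule eq_matI)
    fix i k assume "i < dim_row (B * submatrix M {..<m} K)" "k < dim_col (B * submatrix M {..<m} K)"
    then have i: "i < p" and k: "k < card K" using B MK by auto
    have "pick K k < N" using pick_in_set_le[OF k] K by auto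
    moreover have "col (submatrix M {..<m} K) k = col M (pick K k)"
      using M MK k \<open>pick K k < N\<close> by (intro eq_vecI) (simp_all add: submatrix_all_rows_index[OF M K])
    ultimately show "submatrix (B * M) {..<p} K $$ (i, k) = (B * submatrix M {..<m} K) $$ (i, k)"
      using i k B M MK by (simp add: submatrix_all_rows_index[OF BM K])
  qed (use submatrix_carrier_mat[OF BM subset_refl K] B MK in auto)
qed

lemma distinct_cols_map_mat:
  assumes "distinct (cols (map_mat f A))"
  shows "distinct (cols A)"
proof -
  have "cols (map_mat f A) = map (map_vec f) (cols A)"
    unfolding cols_def by (intro nth_equalityI) (simp_all add: col_map_mat)
  then show ?thesis using assms by (simp add: distinct_map)
qed

lemma distinct_cols_select_cols:
  assumes "distinct (cols M)" "S \<subseteq> {..<dim_col M}"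
  shows "distinct (cols (submatrix M {..<dim_row M} S))"
proof -
  have Mc: "M \<in> carrier_mat (dim_row M) (dim_col M)" by simp
  have MS: "submatrix M {..<dim_row M} S \<in> carrier_mat (dim_row M) (card S)"
    using submatrix_carrier_mat[OF Mc subset_refl assms(2)] by simp
  have col_MS: "col (submatrix M {..<dim_row M} S) k = col M (pick S k)" if "k < card S" for k
    using that MS pick_in_set_le[OF that] assms(2)
    by (intro eq_vecI) (auto simp: submatrix_all_rows_index[OF Mc assms(2)])
  have "inj_on (col M) {0..<dim_col M}" using assms(1) unfolding cols_def distinct_map by simp
  moreover have "pick S ` {0..<card S} \<subseteq> {0..<dim_col M}" using pick_image_subset[of "{..<card S}" S] assms(2)
    by (auto simp: lessThan_atLeast0)
  ultimately have "inj_on (col M \<circ> pick S) {0..<card S}"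
    using inj_on_pick[of S] by (intro comp_inj_on) (auto simp: lessThan_atLeast0 intro: inj_on_subset)
  then have "inj_on (col (submatrix M {..<dim_row M} S)) {0..<card S}"
    using col_MS by (auto simp: inj_on_def)
  then show ?thesis using MS unfolding cols_def distinct_map by simp
qed

lemma distinct_cols_shift_mat:
  assumes "distinct (cols (shift_mat t A))"
  shows "distinct (cols A)"
proof -
  have "cols (shift_mat t A) = map (\<lambda>v. vec (dim_vec v) (\<lambda>i. t $ i + v $ i)) (cols A)"
    unfolding cols_def shift_mat_def by (intro nth_equalityI) auto
  then show ?thesis using assms by (simp add: distinct_map)
qed

section \<open>Determinants and totally 1-submodular matrices\<close>

lemma det_single_nonzero_col:
  fixes S :: "'a::comm_ring_1 mat"
  assumes S: "S \<in> carrier_mat n n" and p: "p < n" and q: "q < n"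
    and z: "\<And>i. i < n \<Longrightarrow> i \<noteq> q \<Longrightarrow> S $$ (i,p) = 0"
  shows "det S = (-1)^(q+p) * S $$ (q,p) * det (mat_delete S q p)"
proof -
  have "det S = (\<Sum>i<n. S $$ (i,p) * cofactor S i p)" by (rule laplace_expansion_column[OF S p])
  also have "\<dots> = (\<Sum>i<n. if i = q then S $$ (q,p) * cofactor S q p else 0)"
    by (rule sum.cong) (use z in auto)
  finally show ?thesis using q unfolding cofactor_def by simp
qed

lemma det_single_nonzero_row:
  fixes S :: "'a::comm_ring_1 mat"
  assumes S: "S \<in> carrier_mat n n" and q: "q < n" and p: "p < n"
    and z: "\<And>j. j < n \<Longrightarrow> j \<noteq> p \<Longrightarrow> S $$ (q,j) = 0"
  shows "det S = (-1)^(q+p) * S $$ (q,p) * det (mat_delete S q p)"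
proof -
  have "det S = (\<Sum>j<n. S $$ (q,j) * cofactor S q j)" by (rule laplace_expansion_row[OF S q])
  also have "\<dots> = (\<Sum>j<n. if j = p then S $$ (q,p) * cofactor S q p else 0)"
    by (rule sum.cong) (use z in auto)
  finally show ?thesis using p unfolding cofactor_def by simp
qed

lemma det_submatrix_zero_col:
  fixes M :: "'a::comm_ring_1 mat"
  assumes M: "M \<in> carrier_mat m N" and I: "I \<subseteq> {..<m}" and K: "K \<subseteq> {..<N}"
    and IK: "card I = card K" and c: "c \<in> K" and zero: "\<And>i. i \<in> I \<Longrightarrow> M $$ (i,c) = 0"
  shows "det (submatrix M I K) = 0"
proof -
  define p where "p = card {a\<in>K. a < c}"
  have fK: "finite K" using K finite_subset by blast
  have "{a\<in>K. a < c} \<subset> K" using c by auto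
  then have p: "p < card K" unfolding p_def by (rule psubset_card_mono[OF fK])
  have S: "submatrix M I K \<in> carrier_mat (card K) (card K)"
    using submatrix_carrier_mat[OF M I K] IK by simp
  have "pick K p = c" unfolding p_def by (rule pick_eqI[OF c refl])
  then have "submatrix M I K $$ (i,p) = 0" if "i < card K" for i
    using that p IK zero[OF pick_in_set_le] by (simp add: submatrix_index_subset[OF M I K])
  then show ?thesis using laplace_expansion_column[OF S p] by simp
qed

lemma det_submatrix_insert_unit_col:
  fixes M :: "'a::linordered_idom mat"
  assumes M: "M \<in> carrier_mat m N" and I: "I \<subseteq> {..<m}" and K: "K \<subseteq> {..<N}"
    and IK: "card I = card K" and r: "r < m" "r \<notin> I" and c: "c < N" "c \<notin> K"
    and unit: "\<And>i. i < m \<Longrightarrow> M $$ (i,c) = (if i = r then 1 else 0)"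
  shows "\<bar>det (submatrix M (insert r I) (insert c K))\<bar> = \<bar>det (submatrix M I K)\<bar>"
proof -
  define I' K' where "I' = insert r I" and "K' = insert c K"
  define q p where "q = card {a\<in>I. a < r}" and "p = card {a\<in>K. a < c}"
  have fI: "finite I" and fK: "finite K" using I K finite_subset by auto
  have I': "I' \<subseteq> {..<m}" and K': "K' \<subseteq> {..<N}" unfolding I'_def K'_def using I K r c by auto
  have cI': "card I' = Suc (card I)" and cK': "card K' = Suc (card I)"
    unfolding I'_def K'_def using fI fK r c IK by simp_all
  have q: "q < Suc (card I)" unfolding q_def using card_mono[OF fI, of "{a\<in>I. a < r}"] by auto
  have p: "p < Suc (card I)" unfolding p_def IK using card_mono[OF fK, of "{a\<in>K. a < c}"] by auto
  have S': "submatrix M I' K' \<in> carrier_mat (Suc (card I)) (Suc (card I))"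
    using submatrix_carrier_mat[OF M I' K'] cI' cK' by simp
  have "{a\<in>I'. a < r} = {a\<in>I. a < r}" "{a\<in>K'. a < c} = {a\<in>K. a < c}"
    unfolding I'_def K'_def by auto
  moreover have "r \<in> I'" "c \<in> K'" unfolding I'_def K'_def by simp_all
  ultimately have pq: "pick I' q = r" and pp: "pick K' p = c"
    unfolding q_def p_def using pick_eqI by metis+
  have col_p: "submatrix M I' K' $$ (i,p) = (if i = q then 1 else 0)" if i: "i < Suc (card I)" for i
  proof -
    have "pick I' i \<in> I'" using pick_in_set_le i cI' by simp
    moreover have "pick I' i = r \<longleftrightarrow> i = q" using inj_on_pick[of I'] i q pq cI' unfolding inj_on_def by auto
    ultimately show ?thesis
      using i p cI' cK' pp unit I' by (simp add: submatrix_index_subset[OF M I' K'] subset_iff)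
  qed
  have "mat_delete (submatrix M I' K') q p = submatrix M I K"
  proof (rule eq_matI)
    fix i k assume "i < dim_row (submatrix M I K)" "k < dim_col (submatrix M I K)"
    then have i: "i < card I" and k: "k < card I" using submatrix_carrier_mat[OF M I K] IK by auto
    have "pick I' (if i < q then i else Suc i) = pick I i"
      unfolding I'_def q_def by (rule pick_insert[OF fI r(2) i])
    moreover have "pick K' (if k < p then k else Suc k) = pick K k"
      unfolding K'_def p_def by (rule pick_insert[OF fK c(2)]) (use k IK in simp)
    ultimately show "mat_delete (submatrix M I' K') q p $$ (i,k) = submatrix M I K $$ (i,k)"
      using i k S' IK cI' cK' unfolding mat_delete_def
      by (simp add: submatrix_index_subset[OF M I' K'] submatrix_index_subset[OF M I K])
  qed (use S' submatrix_carrier_mat[OF M I K] IK in auto)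
  moreover have "det (submatrix M I' K') =
      (-1)^(q+p) * submatrix M I' K' $$ (q,p) * det (mat_delete (submatrix M I' K') q p)"
    by (rule det_single_nonzero_col[OF S' p q]) (simp add: col_p)
  ultimately have "det (submatrix M I' K') = (-1)^(q+p) * det (submatrix M I K)"
    using col_p[OF q] by simp
  then show ?thesis unfolding I'_def K'_def by (simp add: abs_mult)
qed


lemma totally_1_submodularD:
  assumes "totally_1_submodular M" "I \<subseteq> {..<dim_row M}" "K \<subseteq> {..<dim_col M}" "card I = card K"
  shows "\<bar>det (submatrix M I K)\<bar> \<le> 1"
  using assms unfolding totally_1_submodular_def by blast

lemma totally_1_submodular_entry:
  assumes "totally_1_submodular M" "i < dim_row M" "j < dim_col M"
  shows "\<bar>M $$ (i,j)\<bar> \<le> 1"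
proof -
  have M: "M \<in> carrier_mat (dim_row M) (dim_col M)" by simp
  have ij: "{i} \<subseteq> {..<dim_row M}" "{j} \<subseteq> {..<dim_col M}" using assms by auto
  have S: "submatrix M {i} {j} \<in> carrier_mat 1 1" using submatrix_carrier_mat[OF M ij] by simp
  have "pick {i} 0 = i" "pick {j} 0 = j" by (rule pick_eqI, simp, simp)+
  then have "submatrix M {i} {j} $$ (0,0) = M $$ (i,j)" using submatrix_index_subset[OF M ij] by simp
  then have "det (submatrix M {i} {j}) = M $$ (i,j)" using det_single[OF S] by simp
  then show ?thesis using totally_1_submodularD[OF assms(1) ij] by simp
qed

lemma totally_1_submodular_select_cols:
  assumes M: "totally_1_submodular M" and S: "S \<subseteq> {..<dim_col M}"
  shows "totally_1_submodular (submatrix M {..<dim_row M} S)"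
  unfolding totally_1_submodular_def
proof (intro allI impI)
  have Mc: "M \<in> carrier_mat (dim_row M) (dim_col M)" by simp
  have MS: "submatrix M {..<dim_row M} S \<in> carrier_mat (dim_row M) (card S)"
    using submatrix_carrier_mat[OF Mc subset_refl S] by simp
  fix I K assume "I \<subseteq> {..<dim_row (submatrix M {..<dim_row M} S)}"
    and "K \<subseteq> {..<dim_col (submatrix M {..<dim_row M} S)}" and IK: "card I = card K"
  then have I: "I \<subseteq> {..<dim_row M}" and K: "K \<subseteq> {..<card S}" using MS by auto
  have "pick S ` K \<subseteq> {..<dim_col M}" "card I = card (pick S ` K)"
    using pick_image_subset[OF K] S card_pick_image[OF K] IK by auto
  then show "\<bar>det (submatrix (submatrix M {..<dim_row M} S) I K)\<bar> \<le> 1"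
    unfolding submatrix_submatrix_cols[OF Mc S I K] by (rule totally_1_submodularD[OF M I])
qed


text \<open>A square submatrix either contains a zero column or can be bordered by identity columns,
  which preserves its determinant up to sign, until it becomes maximal.\<close>
lemma totally_1_submodularI_maximal_minors:
  assumes M: "M \<in> carrier_mat m N" and J: "J \<subseteq> {..<N}" "card J = m"
    and id: "submatrix M {..<m} J = 1\<^sub>m m"
    and maximal: "\<And>K. K \<subseteq> {..<N} \<Longrightarrow> card K = m \<Longrightarrow> \<bar>det (submatrix M {..<m} K)\<bar> \<le> 1"
  shows "totally_1_submodular M"
proof -
  have c: "pick J r < N" if "r < m" for r using pick_in_set_le[of r J] J that by auto
  have unit: "M $$ (i, pick J r) = (if i = r then 1 else 0)" if "i < m" "r < m" for i r
    using submatrix_all_rows_index[OF M J(1), of i r] id that J(2) by simp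
  have "\<bar>det (submatrix M I K)\<bar> \<le> 1" if "I \<subseteq> {..<m}" "K \<subseteq> {..<N}" "card I = card K" for I K
    using that
  proof (induction "m - card I" arbitrary: I K rule: less_induct)
    case less
    show ?case
    proof (cases "I = {..<m}")
      case True
      then show ?thesis using less.prems maximal by simp
    next
      case False
      then obtain r where r: "r < m" "r \<notin> I" using less.prems(1) by auto
      show ?thesis
      proof (cases "pick J r \<in> K")
        case True
        have "det (submatrix M I K) = 0"
          by (rule det_submatrix_zero_col[OF M less.prems True]) (use unit r less.prems(1) in auto)
        then show ?thesis by simp
      next
        case False
        have "card I < card (insert r I)" "card (insert r I) \<le> m"
          using r less.prems(1) finite_subset[OF less.prems(1)] card_mono[of "{..<m}" "insert r I"] by auto
        then have decr: "m - card (insert r I) < m - card I" by simp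
        have "card (insert r I) = card (insert (pick J r) K)"
          using r False less.prems finite_subset[OF less.prems(1)] finite_subset[OF less.prems(2)] by simp
        then have "\<bar>det (submatrix M (insert r I) (insert (pick J r) K))\<bar> \<le> 1"
          using less.hyps[OF decr] less.prems r c[OF r(1)] by simp
        then show ?thesis
          using det_submatrix_insert_unit_col[OF M less.prems r c[OF r(1)] False] unit r by simp
      qed
    qed
  qed
  then show ?thesis unfolding totally_1_submodular_def using M by auto
qed


lemma finite_minors:
  "finite {\<bar>det (submatrix A I J)\<bar> | I J.
      I \<subseteq> {..<dim_row A} \<and> J \<subseteq> {..<dim_col A} \<and> card I = k \<and> card J = k}"
proof (rule finite_subset)
  show "{\<bar>det (submatrix A I J)\<bar> | I J.
      I \<subseteq> {..<dim_row A} \<and> J \<subseteq> {..<dim_col A} \<and> card I = k \<and> card J = k}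
    \<subseteq> (\<lambda>(I,J). \<bar>det (submatrix A I J)\<bar>) ` (Pow {..<dim_row A} \<times> Pow {..<dim_col A})" by auto
qed simp

lemma Delta_k_ge:
  fixes A :: "'a::{comm_ring_1, linordered_idom} mat"
  assumes "I \<subseteq> {..<dim_row A}" "J \<subseteq> {..<dim_col A}" "card I = k" "card J = k"
  shows "\<bar>det (submatrix A I J)\<bar> \<le> Delta_k k A"
  unfolding Delta_k_def by (rule Max_ge[OF finite_minors]) (use assms in blast)

lemma Delta_k_attained:
  fixes A :: "'a::{comm_ring_1, linordered_idom} mat"
  assumes "k \<le> dim_row A" "k \<le> dim_col A"
  obtains I J where "I \<subseteq> {..<dim_row A}" "J \<subseteq> {..<dim_col A}" "card I = k" "card J = k"
    "\<bar>det (submatrix A I J)\<bar> = Delta_k k A"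
proof -
  let ?minors = "{\<bar>det (submatrix A I J)\<bar> | I J.
      I \<subseteq> {..<dim_row A} \<and> J \<subseteq> {..<dim_col A} \<and> card I = k \<and> card J = k}"
  have "{..<k} \<subseteq> {..<dim_row A}" "{..<k} \<subseteq> {..<dim_col A}" using assms by auto
  then have "\<bar>det (submatrix A {..<k} {..<k})\<bar> \<in> ?minors" by fastforce
  then have "Delta_k k A \<in> ?minors"
    unfolding Delta_k_def by (intro Max_in[OF finite_minors]) auto
  then show ?thesis using that by auto
qed

lemma Delta_k_eqI:
  fixes A :: "'a::{comm_ring_1, linordered_idom} mat"
  assumes "\<And>I J. I \<subseteq> {..<dim_row A} \<Longrightarrow> J \<subseteq> {..<dim_col A} \<Longrightarrow> card I = k \<Longrightarrow> card J = k
      \<Longrightarrow> \<bar>det (submatrix A I J)\<bar> \<le> v"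
    and "I \<subseteq> {..<dim_row A}" "J \<subseteq> {..<dim_col A}" "card I = k" "card J = k"
    and "\<bar>det (submatrix A I J)\<bar> = v"
  shows "Delta_k k A = v"
  unfolding Delta_k_def by (rule Max_eqI[OF finite_minors]) (use assms in blast)+

section \<open>Cosets of integer lattices\<close>

definition covers_cosets :: "nat \<Rightarrow> int mat \<Rightarrow> int vec set \<Rightarrow> bool" where
  "covers_cosets n B R \<longleftrightarrow> R \<subseteq> carrier_vec n \<and>
     (\<forall>a\<in>carrier_vec n. \<exists>r\<in>R. \<exists>z\<in>carrier_vec n. a = r + B *\<^sub>v z)"

lemma covers_cosets_mult_right:
  assumes B: "B \<in> carrier_mat n n" and U: "U \<in> carrier_mat n n" and R: "covers_cosets n (B * U) R"
  shows "covers_cosets n B R"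
  unfolding covers_cosets_def
proof (intro conjI ballI)
  show "R \<subseteq> carrier_vec n" using R unfolding covers_cosets_def by simp
  fix a :: "int vec" assume "a \<in> carrier_vec n"
  then obtain r z where r: "r \<in> R" and z: "z \<in> carrier_vec n" and "a = r + (B * U) *\<^sub>v z"
    using R unfolding covers_cosets_def by blast
  then have "a = r + B *\<^sub>v (U *\<^sub>v z)" using assoc_mult_mat_vec[OF B U z] by simp
  moreover have "U *\<^sub>v z \<in> carrier_vec n" using U z by simp
  ultimately show "\<exists>r\<in>R. \<exists>z\<in>carrier_vec n. a = r + B *\<^sub>v z" using r by blast
qed

lemma sum_lessThan_Suc_insert_index:
  fixes f :: "nat \<Rightarrow> 'a::comm_monoid_add"
  assumes "j < Suc m"
  shows "(\<Sum>l<Suc m. f l) = f j + (\<Sum>l<m. f (insert_index j l))"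
proof -
  have "(\<Sum>l<Suc m. f l) = f j + sum f ({..<Suc m} - {j})"
    by (rule sum.remove) (use assms in auto)
  also have "{..<Suc m} - {j} = insert_index j ` {..<m}"
  proof
    show "insert_index j ` {..<m} \<subseteq> {..<Suc m} - {j}" by (auto simp: insert_index_def)
    show "{..<Suc m} - {j} \<subseteq> insert_index j ` {..<m}"
    proof
      fix x assume x: "x \<in> {..<Suc m} - {j}"
      then have "x = insert_index j (delete_index j x)" by (simp add: insert_delete_index)
      moreover have "delete_index j x < m" using x assms unfolding delete_index_def by auto
      ultimately show "x \<in> insert_index j ` {..<m}" by blast
    qed
  qed
  also have "sum f (insert_index j ` {..<m}) = (\<Sum>l<m. f (insert_index j l))"
    by (rule sum.reindex_cong[where l = "insert_index j"]) (auto simp: inj_on_def insert_index_def)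
  finally show ?thesis .
qed

lemma mult_mat_vec_insert_entry:
  assumes B: "B \<in> carrier_mat n (Suc m)" and j: "j < Suc m" and i: "i < n"
  shows "(B *\<^sub>v vec (Suc m) (\<lambda>l. if l = j then y else z $ delete_index j l)) $ i =
    B $$ (i,j) * y + (\<Sum>l<m. B $$ (i, insert_index j l) * z $ l)"
proof -
  have "insert_index j l \<noteq> j" "insert_index j l < Suc m" if "l < m" for l
    using that unfolding insert_index_def by auto
  then show ?thesis
    using B i j sum_lessThan_Suc_insert_index[OF j,
        of "\<lambda>l. B $$ (i,l) * vec (Suc m) (\<lambda>l. if l = j then y else z $ delete_index j l) $ l"]
    by (simp add: scalar_prod_def lessThan_atLeast0)
qed

text \<open>Reduce the first coordinate modulo b with column j0, then the others modulo the minor.\<close>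
lemma covers_cosets_single_entry_row:
  assumes B: "B \<in> carrier_mat (Suc m) (Suc m)" and j0: "j0 < Suc m" and b: "B $$ (0,j0) \<noteq> 0"
    and zero: "\<And>l. l < Suc m \<Longrightarrow> l \<noteq> j0 \<Longrightarrow> B $$ (0,l) = 0"
    and R: "covers_cosets m (mat_delete B 0 j0) R"
  shows "covers_cosets (Suc m) B ((\<lambda>(c, r). vCons c r) ` ({0..<\<bar>B $$ (0,j0)\<bar>} \<times> R))"
  unfolding covers_cosets_def
proof (intro conjI ballI)
  define b where "b = B $$ (0,j0)"
  define E where "E = mat_delete B 0 j0"
  have E: "E \<in> carrier_mat m m" unfolding E_def using mat_delete_carrier[OF B] by simp
  show "(\<lambda>(c, r). vCons c r) ` ({0..<\<bar>B $$ (0,j0)\<bar>} \<times> R) \<subseteq> carrier_vec (Suc m)"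
    using R unfolding covers_cosets_def by auto
  fix a :: "int vec" assume a: "a \<in> carrier_vec (Suc m)"
  define c y0 where "c = a $ 0 mod \<bar>b\<bar>" and "y0 = sgn b * (a $ 0 div \<bar>b\<bar>)"
  have "b * sgn b = \<bar>b\<bar>" by (cases "b > 0") (auto simp: sgn_if)
  then have a0: "a $ 0 = c + b * y0" unfolding c_def y0_def
    by (metis div_mult_mod_eq mult.assoc mult.commute add.commute)
  have c: "c \<in> {0..<\<bar>b\<bar>}" unfolding c_def using b b_def by simp
  define a' where "a' = vec m (\<lambda>i. a $ Suc i - B $$ (Suc i, j0) * y0)"
  obtain r z' where r: "r \<in> R" and z': "z' \<in> carrier_vec m" and a': "a' = r + E *\<^sub>v z'"
    using R unfolding covers_cosets_def E_def a'_def by fastforce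
  have rc: "r \<in> carrier_vec m" using R r unfolding covers_cosets_def by auto
  define z where "z = vec (Suc m) (\<lambda>l. if l = j0 then y0 else z' $ delete_index j0 l)"
  have Bz: "(B *\<^sub>v z) $ i = B $$ (i, j0) * y0 + (\<Sum>l<m. B $$ (i, insert_index j0 l) * z' $ l)"
    if "i < Suc m" for i
    unfolding z_def by (rule mult_mat_vec_insert_entry[OF B j0 that])
  have "a = vCons c r + B *\<^sub>v z"
  proof (rule eq_vecI)
    fix i assume "i < dim_vec (vCons c r + B *\<^sub>v z)"
    then have i: "i < Suc m" using B by simp
    show "a $ i = (vCons c r + B *\<^sub>v z) $ i"
    proof (cases i)
      case 0
      have "insert_index j0 l < Suc m" "insert_index j0 l \<noteq> j0" if "l < m" for l
        using that unfolding insert_index_def by auto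
      then have "(B *\<^sub>v z) $ 0 = b * y0" using Bz[of 0] zero unfolding b_def by (simp add: mult.commute)
      then show ?thesis using 0 a0 B by simp
    next
      case (Suc i')
      then have i': "i' < m" using i by simp
      have "(E *\<^sub>v z') $ i' = (\<Sum>l<m. B $$ (i, insert_index j0 l) * z' $ l)"
        using E i' z' B Suc by (simp add: E_def mat_delete_def insert_index_def scalar_prod_def lessThan_atLeast0)
      moreover have "a' $ i' = r $ i' + (E *\<^sub>v z') $ i'" using a' rc z' E i' by simp
      ultimately show ?thesis using Bz[OF i] Suc B i i' rc unfolding a'_def by simp
    qed
  qed (use a B in simp)
  moreover have "vCons c r \<in> (\<lambda>(c, r). vCons c r) ` ({0..<\<bar>B $$ (0,j0)\<bar>} \<times> R)"
    using c r unfolding b_def by blast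
  moreover have "z \<in> carrier_vec (Suc m)" unfolding z_def by simp
  ultimately show "\<exists>r\<in>(\<lambda>(c, r). vCons c r) ` ({0..<\<bar>B $$ (0,j0)\<bar>} \<times> R).
      \<exists>z\<in>carrier_vec (Suc m). a = r + B *\<^sub>v z" by blast
qed

lemma first_row_addcol_mod_decreases:
  assumes B: "B \<in> carrier_mat n n" and j: "j < n" and l: "l < n" and bj: "B $$ (0,j) \<noteq> 0"
    and le: "\<bar>B $$ (0,j)\<bar> \<le> \<bar>B $$ (0,l)\<bar>"
  shows "(\<Sum>i<n. nat \<bar>addcol (- (B $$ (0,l) div B $$ (0,j))) l j B $$ (0,i)\<bar>) <
    (\<Sum>i<n. nat \<bar>B $$ (0,i)\<bar>)"
proof (rule sum_strict_mono_ex1)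
  let ?B' = "addcol (- (B $$ (0,l) div B $$ (0,j))) l j B"
  have row0: "?B' $$ (0,i) = (if i = l then B $$ (0,l) mod B $$ (0,j) else B $$ (0,i))" if "i < n" for i
    using that j B by (simp add: minus_div_mult_eq_mod[symmetric])
  have lt: "\<bar>B $$ (0,l) mod B $$ (0,j)\<bar> < \<bar>B $$ (0,j)\<bar>" by (rule abs_mod_less[OF bj])
  show "\<forall>i\<in>{..<n}. nat \<bar>?B' $$ (0,i)\<bar> \<le> nat \<bar>B $$ (0,i)\<bar>" using row0 lt le by auto
  have "nat \<bar>?B' $$ (0,l)\<bar> < nat \<bar>B $$ (0,l)\<bar>" using row0[OF l] lt le by simp
  then show "\<exists>i\<in>{..<n}. nat \<bar>?B' $$ (0,i)\<bar> < nat \<bar>B $$ (0,i)\<bar>" using l by blast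
qed simp

text \<open>Euclid's algorithm on the first row by integral column operations, which shrink the lattice
  B \<int>^n and hence only make covering its cosets harder.\<close>
lemma first_row_reduction:
  assumes "B \<in> carrier_mat (Suc m) (Suc m)"
  shows "\<exists>B'. B' \<in> carrier_mat (Suc m) (Suc m) \<and> det B' = det B \<and>
    (\<forall>R. covers_cosets (Suc m) B' R \<longrightarrow> covers_cosets (Suc m) B R) \<and>
    (\<exists>j0<Suc m. \<forall>l<Suc m. l \<noteq> j0 \<longrightarrow> B' $$ (0,l) = 0)"
  using assms
proof (induction "\<Sum>j<Suc m. nat \<bar>B $$ (0,j)\<bar>" arbitrary: B rule: less_induct)
  case less
  note B = less.prems
  show ?case
  proof (cases "\<exists>j l. j < Suc m \<and> l < Suc m \<and> j \<noteq> l \<and> B $$ (0,j) \<noteq> 0 \<and> B $$ (0,l) \<noteq> 0 \<and>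
      \<bar>B $$ (0,j)\<bar> \<le> \<bar>B $$ (0,l)\<bar>")
    case True
    then obtain j l where j: "j < Suc m" and l: "l < Suc m" and jl: "j \<noteq> l" and bj: "B $$ (0,j) \<noteq> 0"
      and le: "\<bar>B $$ (0,j)\<bar> \<le> \<bar>B $$ (0,l)\<bar>" by blast
    define q where "q = B $$ (0,l) div B $$ (0,j)"
    define B'' where "B'' = addcol (- q) l j B"
    have B'': "B'' \<in> carrier_mat (Suc m) (Suc m)" using B unfolding B''_def carrier_mat_def by simp
    have "(\<Sum>i<Suc m. nat \<bar>B'' $$ (0,i)\<bar>) < (\<Sum>i<Suc m. nat \<bar>B $$ (0,i)\<bar>)"
      unfolding B''_def q_def by (rule first_row_addcol_mod_decreases[OF B j l bj le])
    from less.hyps[OF this B''] obtain B' where B': "B' \<in> carrier_mat (Suc m) (Suc m)" "det B' = det B''"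
      "\<forall>R. covers_cosets (Suc m) B' R \<longrightarrow> covers_cosets (Suc m) B'' R"
      "\<exists>j0<Suc m. \<forall>l<Suc m. l \<noteq> j0 \<longrightarrow> B' $$ (0,l) = 0"
      by blast
    have "B'' = B * addrow_mat (Suc m) (- q) j l" unfolding B''_def by (rule addcol_mat[OF B j])
    then have "covers_cosets (Suc m) B R" if "covers_cosets (Suc m) B'' R" for R
      using covers_cosets_mult_right[OF B addrow_mat_carrier] that by simp
    moreover have "det B'' = det B" unfolding B''_def by (rule det_addcol[OF j jl[symmetric] B])
    ultimately show ?thesis using B' by (intro exI[of _ B']) simp
  next
    case False
    have "\<exists>j0<Suc m. \<forall>l<Suc m. l \<noteq> j0 \<longrightarrow> B $$ (0,l) = 0"
    proof (cases "\<exists>j0<Suc m. B $$ (0,j0) \<noteq> 0")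
      case True
      then obtain j0 where j0: "j0 < Suc m" "B $$ (0,j0) \<noteq> 0" by blast
      have "B $$ (0,l) = 0" if "l < Suc m" "l \<noteq> j0" for l
      proof (rule ccontr)
        assume "B $$ (0,l) \<noteq> 0"
        moreover have "\<bar>B $$ (0,j0)\<bar> \<le> \<bar>B $$ (0,l)\<bar> \<or> \<bar>B $$ (0,l)\<bar> \<le> \<bar>B $$ (0,j0)\<bar>" by linarith
        ultimately show False using False j0 that by blast
      qed
      then show ?thesis using j0(1) by blast
    qed (use zero_less_Suc in blast)
    then show ?thesis using B by blast
  qed
qed

lemma finite_covers_cosets:
  assumes "B \<in> carrier_mat m m" "det B \<noteq> 0"
  shows "\<exists>R. finite R \<and> card R \<le> nat \<bar>det B\<bar> \<and> covers_cosets m B R"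
  using assms
proof (induction m arbitrary: B)
  case 0
  have "a = 0\<^sub>v 0 + B *\<^sub>v 0\<^sub>v 0" if "a \<in> carrier_vec 0" for a :: "int vec"
    using that 0 by (intro eq_vecI) auto
  then have "covers_cosets 0 B {0\<^sub>v 0}" unfolding covers_cosets_def using zero_carrier_vec by blast
  moreover have "det B = 1" using 0 by simp
  ultimately show ?case by (intro exI[of _ "{0\<^sub>v 0}"]) simp
next
  case (Suc m)
  obtain B' j0 where B': "B' \<in> carrier_mat (Suc m) (Suc m)" "det B' = det B"
    "\<And>R. covers_cosets (Suc m) B' R \<Longrightarrow> covers_cosets (Suc m) B R"
    and j0: "j0 < Suc m" and zero: "\<And>l. l < Suc m \<Longrightarrow> l \<noteq> j0 \<Longrightarrow> B' $$ (0,l) = 0"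
    using first_row_reduction[OF Suc.prems(1)] by blast
  define b E where "b = B' $$ (0,j0)" and "E = mat_delete B' 0 j0"
  have E: "E \<in> carrier_mat m m" unfolding E_def using mat_delete_carrier[OF B'(1)] by simp
  have "det B' = (-1)^(0+j0) * b * det E"
    unfolding b_def E_def by (rule det_single_nonzero_row[OF B'(1) _ j0 zero]) simp_all
  then have detB: "\<bar>det B\<bar> = \<bar>b\<bar> * \<bar>det E\<bar>" and b0: "b \<noteq> 0" and E0: "det E \<noteq> 0"
    using B'(2) Suc.prems(2) by (auto simp: abs_mult)
  obtain RE where RE: "finite RE" "card RE \<le> nat \<bar>det E\<bar>" "covers_cosets m E RE"
    using Suc.IH[OF E E0] by blast
  define R where "R = (\<lambda>(c, r). vCons c r) ` ({0..<\<bar>b\<bar>} \<times> RE)"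
  have "covers_cosets (Suc m) B R"
    using B'(3)[OF covers_cosets_single_entry_row[OF B'(1) j0 _ zero]] RE(3) b0
    unfolding R_def b_def E_def by simp
  moreover have "finite R" unfolding R_def using RE(1) by simp
  moreover have "card R \<le> nat \<bar>b\<bar> * card RE"
    unfolding R_def using card_image_le[of "{0..<\<bar>b\<bar>} \<times> RE"] RE(1) by (simp add: card_cartesian_product)
  moreover have "nat \<bar>b\<bar> * card RE \<le> nat \<bar>b\<bar> * nat \<bar>det E\<bar>" using RE(2) by (rule mult_le_mono2)
  moreover have "nat \<bar>det B\<bar> = nat \<bar>b\<bar> * nat \<bar>det E\<bar>" using detB by (simp add: nat_mult_distrib)
  ultimately show ?case by (metis le_trans)
qed

section \<open>Coordinates with respect to a basis of columns\<close>

text \<open>B^-1 A, written with the adjugate so that the denominator det B is explicit.\<close>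
definition basis_coords :: "int mat \<Rightarrow> int mat \<Rightarrow> real mat" where
  "basis_coords B A = (1 / real_of_int (det B)) \<cdot>\<^sub>m map_mat real_of_int (adj_mat B * A)"

lemma basis_coords_carrier:
  assumes "B \<in> carrier_mat m m" "A \<in> carrier_mat m n"
  shows "basis_coords B A \<in> carrier_mat m n"
  using adj_mat(1)[OF assms(1)] assms(2) unfolding basis_coords_def by simp

lemma basis_coords_index:
  assumes "B \<in> carrier_mat m m" "A \<in> carrier_mat m n" "i < m" "j < n"
  shows "basis_coords B A $$ (i,j) = real_of_int ((adj_mat B * A) $$ (i,j)) / real_of_int (det B)"
  using adj_mat(1)[OF assms(1)] assms(2-4) unfolding basis_coords_def by simp

lemma mult_basis_coords:
  assumes B: "B \<in> carrier_mat m m" and A: "A \<in> carrier_mat m n" and d: "det B \<noteq> 0"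
  shows "map_mat real_of_int B * basis_coords B A = map_mat real_of_int A"
proof -
  have D: "adj_mat B \<in> carrier_mat m m" by (rule adj_mat(1)[OF B])
  have "B * (adj_mat B * A) = (B * adj_mat B) * A" using B D A by simp
  also have "\<dots> = det B \<cdot>\<^sub>m A"
    unfolding adj_mat(2)[OF B] mult_smult_assoc_mat[OF one_carrier_mat A] using A by simp
  finally have BDA: "B * (adj_mat B * A) = det B \<cdot>\<^sub>m A" .
  have "map_mat real_of_int B * basis_coords B A =
      (1 / real_of_int (det B)) \<cdot>\<^sub>m (map_mat real_of_int B * map_mat real_of_int (adj_mat B * A))"
    unfolding basis_coords_def by (rule mult_smult_distrib) (use B D A in auto)
  also have "map_mat real_of_int B * map_mat real_of_int (adj_mat B * A) = map_mat real_of_int (det B \<cdot>\<^sub>m A)"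
    unfolding BDA[symmetric] by (rule of_int_hom.mat_hom_mult[OF B mult_carrier_mat[OF D A], symmetric])
  also have "(1 / real_of_int (det B)) \<cdot>\<^sub>m map_mat real_of_int (det B \<cdot>\<^sub>m A) = map_mat real_of_int A"
    using d by (intro eq_matI) auto
  finally show ?thesis .
qed

lemma submatrix_basis_coords:
  assumes B: "B \<in> carrier_mat m m" and A: "A \<in> carrier_mat m n" and K: "K \<subseteq> {..<n}"
  shows "submatrix (basis_coords B A) {..<m} K = basis_coords B (submatrix A {..<m} K)"
  unfolding basis_coords_def smult_mat_def submatrix_map_mat
    submatrix_mult_all_rows[OF adj_mat(1)[OF B] A K] by (rule refl)

lemma basis_coords_self:
  assumes B: "B \<in> carrier_mat m m" and d: "det B \<noteq> 0"
  shows "basis_coords B B = 1\<^sub>m m"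
  using adj_mat(3)[OF B] B d unfolding basis_coords_def by (intro eq_matI) auto

lemma det_basis_coords:
  assumes B: "B \<in> carrier_mat m m" and A: "A \<in> carrier_mat m m" and d: "det B \<noteq> 0"
  shows "det (basis_coords B A) = real_of_int (det A) / real_of_int (det B)"
proof -
  have "real_of_int (det B) * det (basis_coords B A) = real_of_int (det A)"
    using arg_cong[OF mult_basis_coords[OF B A d], of det] det_mult[OF _ basis_coords_carrier[OF B A]] B
    by (simp add: of_int_hom.hom_det)
  then show ?thesis using d by (simp add: field_simps)
qed

lemma distinct_cols_basis_coords:
  assumes B: "B \<in> carrier_mat m m" and A: "A \<in> carrier_mat m n" and d: "det B \<noteq> 0"
    and dist: "distinct (cols A)"
  shows "distinct (cols (basis_coords B A))"
proof -
  let ?C = "basis_coords B A"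
  have C: "?C \<in> carrier_mat m n" by (rule basis_coords_carrier[OF B A])
  have col_eq: "col A j = col A j'" if j: "j < n" "j' < n" and eq: "col ?C j = col ?C j'" for j j'
  proof (rule eq_vecI)
    have cols: "col (map_mat real_of_int A) j = col (map_mat real_of_int A) j'"
      using j eq col_mult2[OF _ C, of "map_mat real_of_int B"] B
      unfolding mult_basis_coords[OF B A d, symmetric] by simp
    fix i assume "i < dim_vec (col A j')"
    then have i: "i < m" using A by simp
    have "real_of_int (A $$ (i,j)) = real_of_int (A $$ (i,j'))"
      using arg_cong[OF cols, of "\<lambda>v. v $ i"] A j i by simp
    then show "col A j $ i = col A j' $ i" using A j i by simp
  qed (use A in simp)
  have inj: "inj_on (col A) {0..<n}" using dist A unfolding cols_def distinct_map by simp
  have "inj_on (col ?C) {0..<n}"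
  proof (rule inj_onI)
    fix j j' assume j: "j \<in> {0..<n}" "j' \<in> {0..<n}" and "col ?C j = col ?C j'"
    then have "col A j = col A j'" by (intro col_eq) auto
    then show "j = j'" using inj_onD[OF inj _ j] by blast
  qed
  then show ?thesis using C unfolding cols_def distinct_map by simp
qed

lemma basis_coords_denominator:
  assumes "B \<in> carrier_mat m m" "A \<in> carrier_mat m n" "i < m" "j < n"
  shows "\<exists>k::int. basis_coords B A $$ (i,j) = real_of_int k / real_of_int \<bar>det B\<bar>"
proof -
  let ?g = "(adj_mat B * A) $$ (i,j)"
  have "basis_coords B A $$ (i,j) = real_of_int (sgn (det B) * ?g) / real_of_int \<bar>det B\<bar>"
    using basis_coords_index[OF assms] by (cases "det B > 0") (auto simp: sgn_if)
  then show ?thesis by blast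
qed

text \<open>Columns of A that are congruent modulo the lattice B \<int>^m have coordinates that differ by an
  integer vector, so the fractional parts of the coordinates take at most |det B| values.\<close>
lemma card_frac_cols_basis_coords:
  assumes B: "B \<in> carrier_mat m m" and A: "A \<in> carrier_mat m n" and d: "det B \<noteq> 0"
  shows "card ((\<lambda>j. map_vec frac (col (basis_coords B A) j)) ` {..<n}) \<le> nat \<bar>det B\<bar>"
proof -
  obtain R where R: "finite R" "card R \<le> nat \<bar>det B\<bar>" "covers_cosets m B R"
    using finite_covers_cosets[OF B d] by blast
  define D where "D = adj_mat B"
  have D: "D \<in> carrier_mat m m" unfolding D_def by (rule adj_mat(1)[OF B])
  define \<phi> where "\<phi> r = vec m (\<lambda>i. frac (real_of_int ((D *\<^sub>v r) $ i) / real_of_int (det B)))" for r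
  have "(\<lambda>j. map_vec frac (col (basis_coords B A) j)) ` {..<n} \<subseteq> \<phi> ` R"
  proof (intro image_subsetI)
    fix j assume "j \<in> {..<n}"
    then have j: "j < n" by simp
    obtain r z where r: "r \<in> R" and z: "z \<in> carrier_vec m" and az: "col A j = r + B *\<^sub>v z"
      using R(3) A unfolding covers_cosets_def by (metis carrier_matD(1) col_dim carrier_vecI)
    have rc: "r \<in> carrier_vec m" using R(3) r unfolding covers_cosets_def by auto
    have "D *\<^sub>v col A j = D *\<^sub>v r + (D * B) *\<^sub>v z"
      unfolding az using mult_add_distrib_mat_vec[OF D rc mult_mat_vec_carrier[OF B z]]
        assoc_mult_mat_vec[OF D B z] by simp
    also have "(D * B) *\<^sub>v z = det B \<cdot>\<^sub>v z" unfolding D_def adj_mat(3)[OF B] using z by auto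
    finally have Dcol: "D *\<^sub>v col A j = D *\<^sub>v r + det B \<cdot>\<^sub>v z" .
    have "basis_coords B A $$ (i,j) = real_of_int ((D *\<^sub>v r) $ i) / real_of_int (det B) + of_int (z $ i)"
      if i: "i < m" for i
    proof -
      have "(adj_mat B * A) $$ (i,j) = (D *\<^sub>v col A j) $ i" using i j D A unfolding D_def by simp
      also have "\<dots> = (D *\<^sub>v r) $ i + det B * z $ i" unfolding Dcol using i D rc z by simp
      finally show ?thesis using basis_coords_index[OF B A i j] d by (simp add: add_divide_distrib)
    qed
    then have "map_vec frac (col (basis_coords B A) j) = \<phi> r"
      using basis_coords_carrier[OF B A] j unfolding \<phi>_def
      by (intro eq_vecI) (simp_all add: frac_add_of_int_right)
    then show "map_vec frac (col (basis_coords B A) j) \<in> \<phi> ` R" using r by blast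
  qed
  then have "card ((\<lambda>j. map_vec frac (col (basis_coords B A) j)) ` {..<n}) \<le> card (\<phi> ` R)"
    by (rule card_mono[rotated]) (use R(1) in simp)
  also have "\<dots> \<le> card R" by (rule card_image_le[OF R(1)])
  finally show ?thesis using R(2) by simp
qed

section \<open>Splitting the columns by fractional parts\<close>

lemma Delta_k_eq_1I:
  fixes X :: "int mat"
  assumes X: "X \<in> carrier_mat m N" and T: "totally_1_submodular (map_mat real_of_int X)"
    and K: "K \<subseteq> {..<N}" "card K = m" "det (submatrix X {..<m} K) = 1"
  shows "Delta_k m X = 1"
proof (rule Delta_k_eqI[of X m 1 "{..<m}" K])
  fix I K' assume IK: "I \<subseteq> {..<dim_row X}" "K' \<subseteq> {..<dim_col X}" "card I = m" "card K' = m"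
  have "\<bar>real_of_int (det (submatrix X I K'))\<bar> \<le> 1"
    using totally_1_submodularD[OF T, of I K'] IK by (simp add: submatrix_map_mat of_int_hom.hom_det)
  then show "\<bar>det (submatrix X I K')\<bar> \<le> 1" by (simp flip: of_int_abs)
qed (use X K in auto)

lemma card_integral_cols_le_heller_1:
  assumes C: "C \<in> carrier_mat m n" and T: "totally_1_submodular C" and dist: "distinct (cols C)"
    and S: "S \<subseteq> {..<n}" and J: "J \<subseteq> S" "card J = m" and id: "submatrix C {..<m} J = 1\<^sub>m m"
    and int: "\<And>i j. i < m \<Longrightarrow> j \<in> S \<Longrightarrow> C $$ (i,j) \<in> \<int>"
  shows "enat (card S) \<le> heller 1 m"
proof -
  let ?CS = "submatrix C {..<m} S"
  define X where "X = map_mat floor ?CS"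
  have CS: "?CS \<in> carrier_mat m (card S)" using submatrix_carrier_mat[OF C subset_refl S] by simp
  have X: "X \<in> carrier_mat m (card S)" unfolding X_def using CS by simp
  have XC: "map_mat real_of_int X = ?CS"
  proof (rule eq_matI)
    fix i k assume "i < dim_row ?CS" "k < dim_col ?CS"
    then have i: "i < m" and k: "k < card S" using CS by auto
    have "C $$ (i, pick S k) \<in> \<int>" using int[OF i] pick_in_set_le[OF k] by simp
    then show "map_mat real_of_int X $$ (i,k) = ?CS $$ (i,k)"
      using i k CS unfolding X_def by (auto simp: submatrix_all_rows_index[OF C S] elim: Ints_cases)
  qed (use X CS in auto)
  have "finite S" using S finite_subset by auto
  define K0 where "K0 = {k \<in> {..<card S}. pick S k \<in> J}"
  have K0: "K0 \<subseteq> {..<card S}" unfolding K0_def by auto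
  have "pick S ` K0 = J" using bij_betw_pick[OF \<open>finite S\<close>] J(1) unfolding K0_def bij_betw_def by auto
  then have cK0: "card K0 = m" and CK0: "submatrix ?CS {..<m} K0 = 1\<^sub>m m"
    using card_pick_image[OF K0] J submatrix_submatrix_cols[OF C S subset_refl K0] id by auto
  have "real_of_int (det (submatrix X {..<m} K0)) = det (submatrix ?CS {..<m} K0)"
    unfolding XC[symmetric] submatrix_map_mat by (simp add: of_int_hom.hom_det)
  then have "det (submatrix X {..<m} K0) = 1" using CK0 by simp
  then have "Delta_k m X = 1"
    using Delta_k_eq_1I[OF X _ K0 cK0] totally_1_submodular_select_cols[OF T] C S XC by simp
  moreover have "distinct (cols X)"
    using distinct_cols_select_cols[OF dist] C S XC distinct_cols_map_mat[of real_of_int X] by simp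
  moreover have "m \<le> card S" using card_mono[OF \<open>finite S\<close> J(1)] J(2) by simp
  ultimately show ?thesis unfolding heller_def using X by (intro Sup_upper) auto
qed

lemma of_int_floor_in_unit_range:
  fixes x :: real
  assumes "\<bar>x\<bar> \<le> 1"
  shows "real_of_int \<lfloor>x\<rfloor> \<in> {-1, 0, 1}"
proof -
  have "-1 \<le> \<lfloor>x\<rfloor>" "\<lfloor>x\<rfloor> \<le> 1" using assms by (simp_all add: le_floor_iff floor_le_iff abs_le_iff)
  then have "\<lfloor>x\<rfloor> = -1 \<or> \<lfloor>x\<rfloor> = 0 \<or> \<lfloor>x\<rfloor> = 1" by linarith
  then show ?thesis by auto
qed

text \<open>The witness is the matrix of floors of the columns in S; its entries lie in {-1, 0, 1}
  because the entries of C are bounded by 1.\<close>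
lemma shifted_admissible_frac_class:
  assumes C: "C \<in> carrier_mat m n" and T: "totally_1_submodular C" and dist: "distinct (cols C)"
    and S: "S \<subseteq> {..<n}" "j0 \<in> S" and same_frac: "\<And>j. j \<in> S \<Longrightarrow> map_vec frac (col C j) = t"
    and t0: "t \<noteq> 0\<^sub>v m" and P: "P t"
  shows "shifted_admissible P m (card S)"
proof -
  let ?CS = "submatrix C {..<m} S"
  define X where "X = map_mat (\<lambda>x. real_of_int \<lfloor>x\<rfloor>) ?CS"
  have CS: "?CS \<in> carrier_mat m (card S)" using submatrix_carrier_mat[OF C subset_refl S(1)] by simp
  have X: "X \<in> carrier_mat m (card S)" unfolding X_def using CS by simp
  have t: "t \<in> carrier_vec m" "\<forall>i<m. 0 \<le> t $ i \<and> t $ i < 1"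
    using same_frac[OF S(2)] C S by (auto simp: frac_lt_1)
  have CS_index: "?CS $$ (i,k) = C $$ (i, pick S k)" "pick S k < n"
    and t_index: "t $ i = frac (C $$ (i, pick S k))" if "i < m" "k < card S" for i k
  proof -
    show "?CS $$ (i,k) = C $$ (i, pick S k)" by (rule submatrix_all_rows_index[OF C S(1) that])
    show "pick S k < n" using pick_in_set_le[OF that(2)] S by auto
    then show "t $ i = frac (C $$ (i, pick S k))"
      using same_frac[OF pick_in_set_le[OF that(2)]] that C by (auto simp: vec_eq_iff)
  qed
  have shift: "shift_mat t X = ?CS"
    using CS_index t_index X CS unfolding shift_mat_def X_def by (intro eq_matI) (auto simp: frac_def)
  have "X $$ (i,k) \<in> {-1, 0, 1}" if "i < m" "k < card S" for i k
  proof -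
    have "\<bar>C $$ (i, pick S k)\<bar> \<le> 1" using totally_1_submodular_entry[OF T] CS_index that C by simp
    moreover have "X $$ (i,k) = real_of_int \<lfloor>C $$ (i, pick S k)\<rfloor>"
      unfolding X_def using that CS CS_index by simp
    ultimately show ?thesis using of_int_floor_in_unit_range by simp
  qed
  moreover have "distinct (cols X)"
    using distinct_cols_shift_mat[of t X] distinct_cols_select_cols[OF dist] shift C S by simp
  moreover have "totally_1_submodular (shift_mat t X)"
    using totally_1_submodular_select_cols[OF T] shift C S by simp
  ultimately show ?thesis unfolding shifted_admissible_def using t t0 P X by blast
qed

lemma frac_col_in_identity:
  assumes C: "C \<in> carrier_mat m n" and J: "J \<subseteq> {..<n}" "card J = m"
    and id: "submatrix C {..<m} J = 1\<^sub>m m" and j: "j \<in> J"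
  shows "map_vec frac (col C j) = 0\<^sub>v m"
proof -
  obtain r where r: "r < m" "j = pick J r"
    using bij_betw_pick[OF finite_subset[OF J(1)]] J(2) j by (auto simp: bij_betw_def)
  then have "C $$ (i,j) = (if i = r then 1 else 0)" if "i < m" for i
    using submatrix_all_rows_index[OF C J(1) that, of r] id J r that by simp
  then show ?thesis using C J(1) j by (intro eq_vecI) auto
qed

lemma frac_of_int_divide:
  assumes "\<Delta> \<noteq> 0"
  shows "\<exists>k'::int. frac (of_int k / of_nat \<Delta> :: real) = of_int k' / of_nat \<Delta>"
proof -
  have "frac (of_int k / of_nat \<Delta> :: real) = of_int (k - \<lfloor>of_int k / of_nat \<Delta> :: real\<rfloor> * int \<Delta>) / of_nat \<Delta>"
    using assms by (simp add: frac_def field_simps)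
  then show ?thesis by blast
qed

text \<open>The columns split into classes according to their fractional parts: the integral class
  (which contains the identity columns) and at most \<Delta> - 1 shifted classes.\<close>
lemma le_heller_plus_shifted_classes:
  fixes \<Delta> :: nat
  assumes C: "C \<in> carrier_mat m n" and T: "totally_1_submodular C" and dist: "distinct (cols C)"
    and J: "J \<subseteq> {..<n}" "card J = m" "submatrix C {..<m} J = 1\<^sub>m m" and m: "m > 0"
    and den: "\<And>i j. i < m \<Longrightarrow> j < n \<Longrightarrow> \<exists>k::int. C $$ (i,j) = of_int k / of_nat \<Delta>"
    and classes: "card ((\<lambda>j. map_vec frac (col C j)) ` {..<n}) \<le> \<Delta>"
  shows "enat n \<le> heller 1 m + enat (\<Delta> - 1) * refined_shifted_heller \<Delta> m"
proof -
  define f where "f j = map_vec frac (col C j)" for j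
  define S where "S t = {j. j \<in> {..<n} \<and> f j = t}" for t
  define T where "T = f ` {..<n}"
  let ?z = "0\<^sub>v m :: real vec"
  have f_index: "f j $ i = frac (C $$ (i,j))" if "i < m" "j < n" for i j
    using that C unfolding f_def by simp
  have "f j = ?z" if "j \<in> J" for j
    unfolding f_def by (rule frac_col_in_identity[OF C J that])
  then have JS: "J \<subseteq> S ?z" using J(1) unfolding S_def by auto
  obtain j where "j \<in> J" using J(2) m by fastforce
  then have zT: "?z \<in> T" using JS unfolding S_def T_def by force
  have fT: "finite T" unfolding T_def by simp
  have cT: "card T \<le> \<Delta>" using classes unfolding T_def f_def .
  have "\<Delta> \<noteq> 0" using cT card_gt_0_iff[of T] fT zT by auto
  have "n = (\<Sum>t\<in>T. card (S t))"
    using sum.image_gen[of "{..<n}" "\<lambda>_. 1::nat" f] unfolding S_def T_def by simp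
  also have "\<dots> = card (S ?z) + (\<Sum>t\<in>T - {?z}. card (S t))"
    by (rule sum.remove[OF fT zT])
  finally have n_sum: "n = card (S ?z) + (\<Sum>t\<in>T - {?z}. card (S t))" .
  have n: "enat n = enat (card (S ?z)) + (\<Sum>t\<in>T - {?z}. enat (card (S t)))"
    unfolding n_sum by (simp add: of_nat_eq_enat[symmetric])
  have "enat (card (S ?z)) \<le> heller 1 m"
  proof (rule card_integral_cols_le_heller_1[OF C T dist _ JS J(2-3)])
    show "S ?z \<subseteq> {..<n}" unfolding S_def by auto
    show "C $$ (i,j) \<in> \<int>" if "i < m" "j \<in> S ?z" for i j
      using that f_index[of i j] unfolding S_def by (simp add: frac_eq_0_iff)
  qed
  moreover have "enat (card (S t)) \<le> refined_shifted_heller \<Delta> m" if t: "t \<in> T - {?z}" for t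
  proof -
    obtain j0 where j0: "j0 < n" "t = f j0" using t unfolding T_def by auto
    have "\<exists>k::int. t $ i = of_int k / of_nat \<Delta>" if "i < dim_vec t" for i
    proof -
      have i: "i < m" using that C j0 unfolding f_def by simp
      obtain k where "C $$ (i,j0) = of_int k / of_nat \<Delta>" using den[OF i j0(1)] by blast
      then show ?thesis using f_index[OF i j0(1)] j0 frac_of_int_divide[OF \<open>\<Delta> \<noteq> 0\<close>] by simp
    qed
    then have "shifted_admissible (\<lambda>t. \<forall>i<dim_vec t. \<exists>k::int. t $ i = of_int k / of_nat \<Delta>) m (card (S t))"
      using t j0 by (intro shifted_admissible_frac_class[OF C T dist, of "S t" j0]) (auto simp: S_def f_def)
    then show ?thesis unfolding refined_shifted_heller_def by (intro Sup_upper) blast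
  qed
  then have "(\<Sum>t\<in>T - {?z}. enat (card (S t))) \<le> of_nat (card (T - {?z})) * refined_shifted_heller \<Delta> m"
    by (rule sum_bounded_above)
  moreover have "of_nat (card (T - {?z})) \<le> enat (\<Delta> - 1)"
    using cT zT fT by (simp add: card_Diff_singleton of_nat_eq_enat)
  ultimately show ?thesis
    unfolding n by (meson add_mono mult_right_mono order_trans zero_le)
qed

lemma basis_coords_maximal_basis:
  assumes A: "A \<in> carrier_mat m n" and J: "J \<subseteq> {..<n}" "card J = m"
    and d: "det (submatrix A {..<m} J) \<noteq> 0"
    and maximal: "\<And>K. K \<subseteq> {..<n} \<Longrightarrow> card K = m \<Longrightarrow>
      \<bar>det (submatrix A {..<m} K)\<bar> \<le> \<bar>det (submatrix A {..<m} J)\<bar>"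
  shows "submatrix (basis_coords (submatrix A {..<m} J) A) {..<m} J = 1\<^sub>m m"
    and "totally_1_submodular (basis_coords (submatrix A {..<m} J) A)"
proof -
  define B where "B = submatrix A {..<m} J"
  have B: "B \<in> carrier_mat m m" using submatrix_carrier_mat[OF A subset_refl J(1)] J(2) unfolding B_def by simp
  have C: "basis_coords B A \<in> carrier_mat m n" by (rule basis_coords_carrier[OF B A])
  show id: "submatrix (basis_coords B A) {..<m} J = 1\<^sub>m m"
    using submatrix_basis_coords[OF B A J(1)] basis_coords_self[OF B d[folded B_def]] unfolding B_def by simp
  have "\<bar>det (submatrix (basis_coords B A) {..<m} K)\<bar> \<le> 1" if K: "K \<subseteq> {..<n}" "card K = m" for K
  proof -
    have AK: "submatrix A {..<m} K \<in> carrier_mat m m" using submatrix_carrier_mat[OF A subset_refl K(1)] K(2) by simp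
    have "det (submatrix (basis_coords B A) {..<m} K) =
        real_of_int (det (submatrix A {..<m} K)) / real_of_int (det B)"
      using submatrix_basis_coords[OF B A K(1)] det_basis_coords[OF B AK d[folded B_def]] by simp
    moreover have "\<bar>real_of_int (det (submatrix A {..<m} K))\<bar> \<le> \<bar>real_of_int (det B)\<bar>"
      using maximal[OF K] unfolding B_def by (simp flip: of_int_abs)
    ultimately show ?thesis using d unfolding B_def by (simp add: abs_divide divide_le_eq_1)
  qed
  then show "totally_1_submodular (basis_coords B A)" by (rule totally_1_submodularI_maximal_minors[OF C J id])
qed

lemma heller_le_refined_shifted_heller:
  assumes "\<Delta> > 0" "m > 0"
  shows "heller \<Delta> m \<le> heller 1 m + enat (\<Delta> - 1) * refined_shifted_heller \<Delta> m"
  unfolding heller_def[of \<Delta> m]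
proof (rule Sup_least)
  fix x assume "x \<in> {enat n |n. \<exists>A :: int mat. A \<in> carrier_mat m n \<and> m \<le> n \<and>
       distinct (cols A) \<and> Delta_k m A = int \<Delta>}"
  then obtain n A where x: "x = enat n" and A: "A \<in> carrier_mat m n" "m \<le> n"
    and dist: "distinct (cols A)" and \<Delta>: "Delta_k m A = int \<Delta>" by blast
  obtain I J where IJ: "I \<subseteq> {..<m}" "J \<subseteq> {..<n}" "card I = m" "card J = m"
    and BJ: "\<bar>det (submatrix A I J)\<bar> = int \<Delta>"
    using Delta_k_attained[of m A] A \<Delta> by auto
  have "I = {..<m}" using IJ by (intro card_subset_eq) auto
  define B where "B = submatrix A {..<m} J"
  have B: "B \<in> carrier_mat m m" using submatrix_carrier_mat[OF A(1) subset_refl IJ(2)] IJ(4) unfolding B_def by simp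
  have detB: "\<bar>det B\<bar> = int \<Delta>" and d: "det B \<noteq> 0"
    using BJ \<open>I = {..<m}\<close> assms(1) unfolding B_def by auto
  have maximal: "\<bar>det (submatrix A {..<m} K)\<bar> \<le> \<bar>det B\<bar>" if "K \<subseteq> {..<n}" "card K = m" for K
    using Delta_k_ge[of "{..<m}" A K m] that A \<Delta> detB by simp
  note C = basis_coords_maximal_basis[OF A(1) IJ(2,4) d[unfolded B_def] maximal[unfolded B_def]]
  have id: "submatrix (basis_coords B A) {..<m} J = 1\<^sub>m m" using C(1) unfolding B_def .
  have T: "totally_1_submodular (basis_coords B A)" using C(2) unfolding B_def .
  have den: "\<exists>k::int. basis_coords B A $$ (i,j) = of_int k / of_nat \<Delta>" if "i < m" "j < n" for i j
    using basis_coords_denominator[OF B A(1) that] detB by simp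
  have classes: "card ((\<lambda>j. map_vec frac (col (basis_coords B A) j)) ` {..<n}) \<le> \<Delta>"
    using card_frac_cols_basis_coords[OF B A(1) d] detB by simp
  show "x \<le> heller 1 m + enat (\<Delta> - 1) * refined_shifted_heller \<Delta> m"
    unfolding x using le_heller_plus_shifted_classes[OF basis_coords_carrier[OF B A(1)] T
        distinct_cols_basis_coords[OF B A(1) d dist] IJ(2,4) id assms(2) den classes] .
qed

lemma refined_shifted_heller_le_shifted_heller: "refined_shifted_heller \<delta> m \<le> shifted_heller m"
  unfolding refined_shifted_heller_def shifted_heller_def
  by (rule Sup_subset_mono) (auto simp: shifted_admissible_def)

theorem lemma2p3:
  fixes \<Delta> m :: nat
  assumes "\<Delta> > 0" and "m > 0"
  shows "heller \<Delta> m \<le> heller 1 m + enat (\<Delta> - 1) * refined_shifted_heller \<Delta> m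
       \<and> heller \<Delta> m \<le> heller 1 m + enat (\<Delta> - 1) * shifted_heller m"
proof
  show refined: "heller \<Delta> m \<le> heller 1 m + enat (\<Delta> - 1) * refined_shifted_heller \<Delta> m"
    by (rule heller_le_refined_shifted_heller[OF assms])
  have "enat (\<Delta> - 1) * refined_shifted_heller \<Delta> m \<le> enat (\<Delta> - 1) * shifted_heller m"
    by (rule mult_left_mono[OF refined_shifted_heller_le_shifted_heller]) simp
  then show "heller \<Delta> m \<le> heller 1 m + enat (\<Delta> - 1) * shifted_heller m"
    using refined by (meson add_left_mono order_trans)
qed

end
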